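(* Let $n\ge 2$ (in particular $n\ge3$), let $0<\varepsilon<1$ and let $K_{\varepsilon}$ be the body of revolution about the $x_n$-axis in $\mathbb{R}^n$ whose radial function is $\rho_{K_\varepsilon}(\phi)=(1+\varepsilon\cos^3\phi)^{-1/3}$, where $0\le\phi\le\pi$ is the angle with the positive $x_n$-axis; equivalently $\rho_{K_\varepsilon}(x)=(|x|^3+\varepsilon x_n^3)^{-1/3}$ for $x=(x_1,\dots,x_n)\in\mathbb{R}^n\setminus\{o\}$. Then $\rho_{K_\varepsilon}\in C^\infty(S^{n-1})$, the body $K_\varepsilon$ is not centrally symmetric, and there is a positive $\varepsilon_0\le 1$ such that $K_\varepsilon$ is convex for all $0<\varepsilon<\varepsilon_0$.
   Context: For a body $K$ star-shaped with respect to the origin and containing it in its interior, the radial function is $\rho_K(x)=\max\{c\in\mathbb{R}: cx\in K\}$, $x\ne o$ (homogeneous of degree $-1$); the body is determined by $\rho_K$ on $S^{n-1}$ via $K=\{x: x=o \text{ or } \rho_K(x)\ge 1\}$. A set is centrally symmetric if it is a translate of a set $X$ with $X=-X$. *)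

theory Defs
  imports "HOL-Analysis.Analysis"
begin

text \<open>C-infinity on an open set S of R^n (real valued): all iterated partial derivatives
  exist on S and are continuous on S.  D [i_k,...,i_1] is the partial derivative
  d_{i_k} ... d_{i_1} f.\<close>
definition smooth_on :: "(real^'n) set \<Rightarrow> (real^'n \<Rightarrow> real) \<Rightarrow> bool" where
  "smooth_on S f \<longleftrightarrow>
     (\<exists>D :: 'n list \<Rightarrow> real^'n \<Rightarrow> real.
        (\<forall>x\<in>S. D [] x = f x) \<and>
        (\<forall>is. continuous_on S (D is)) \<and>
        (\<forall>is i. \<forall>x\<in>S.
           ((\<lambda>t. D is (x + t *\<^sub>R axis i 1)) has_real_derivative D (i # is) x) (at 0)))"

text \<open>The radial function of K_eps, axis of revolution = coordinate axis a.\<close>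
definition rhoK :: "'n \<Rightarrow> real \<Rightarrow> real^'n \<Rightarrow> real" where
  "rhoK a \<epsilon> x = (norm x ^ 3 + \<epsilon> * (x $ a) ^ 3) powr (-1/3)"

definition Keps :: "'n \<Rightarrow> real \<Rightarrow> (real^'n) set" where
  "Keps a \<epsilon> = {x. x = 0 \<or> rhoK a \<epsilon> x \<ge> 1}"

definition centrally_symmetric :: "('a::real_vector) set \<Rightarrow> bool" where
  "centrally_symmetric K \<longleftrightarrow> (\<exists>c X. X = uminus ` X \<and> K = (\<lambda>x. c + x) ` X)"

end

theory Submission
  imports Defs
begin

text \<open>Put Q(x) = |x|^3 + \<epsilon> x_a^3, the cube of the gauge of K: then \<rho> = Q^(-1/3) and K = {Q \<le> 1}.
  Smoothness: \<partial>_i \<rho> = -\<rho>^4 (|x| x_i + \<epsilon> \<delta>_ia x_a^2), so the polynomials in the coordinates,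
  |x|, 1/|x| and \<rho> form a class that contains \<rho> and is closed under partial differentiation.
  Convexity: for \<epsilon> \<le> 1/18 the remainder of the tangent expansion of |x|^3 dominates that of
  \<epsilon> x_a^3, so Q lies above its tangent planes, hence is convex, and K is a sublevel set of Q.
  Asymmetry: reflection in a centre c would map a boundary point of K to a point with Q > 1.
  If c_a = 0, take the lowest point -t e_a, (1 - \<epsilon>) t^3 = 1, whose image has height t;
  otherwise take a point \<plusminus>e_j of the equator, whose image has |x_j| \<ge> 1 and x_a \<noteq> 0.\<close>

definition gauge_cube :: "'n \<Rightarrow> real \<Rightarrow> real^'n \<Rightarrow> real" where
  "gauge_cube a e x = norm x ^ 3 + e * (x $ a) ^ 3"

lemma gauge_cube_pos:
  fixes x :: "real^'n"
  assumes "x \<noteq> 0" "0 \<le> e" "e < 1"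
  shows "gauge_cube a e x > 0"
proof -
  have "\<bar>x $ a\<bar> ^ 3 \<le> norm x ^ 3"
    by (intro power_mono component_le_norm_cart) simp
  then have "e * (- ((x $ a) ^ 3)) \<le> e * norm x ^ 3"
    using assms(2) by (intro mult_left_mono) (auto simp: power_abs[symmetric] abs_le_iff)
  moreover have "e * norm x ^ 3 < norm x ^ 3"
    using assms by simp
  ultimately show ?thesis
    unfolding gauge_cube_def by linarith
qed

lemma Keps_eq_sublevel:
  assumes "0 \<le> e" "e < 1"
  shows "Keps a e = {x. gauge_cube a e x \<le> 1}"
proof -
  have "1 \<le> rhoK a e x \<longleftrightarrow> gauge_cube a e x \<le> 1" if "x \<noteq> 0" for x
  proof -
    have "gauge_cube a e x > 0"
      using gauge_cube_pos[OF that assms] .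
    then show ?thesis
      using powr_mono2'[of "-1/3" "gauge_cube a e x" 1] powr_less_one[of "gauge_cube a e x" "-1/3"]
      unfolding rhoK_def gauge_cube_def[symmetric] by force
  qed
  moreover have "gauge_cube a e 0 \<le> 1"
    by (simp add: gauge_cube_def)
  ultimately show ?thesis
    unfolding Keps_def by (intro Collect_cong) metis
qed

lemma has_real_derivative_along_line:
  fixes f :: "'a::real_normed_vector \<Rightarrow> real"
  assumes "(f has_derivative f') (at x)"
  shows "((\<lambda>t. f (x + t *\<^sub>R v)) has_real_derivative f' v) (at 0)"
proof -
  have "((\<lambda>t. x + t *\<^sub>R v) has_derivative (\<lambda>t. t *\<^sub>R v)) (at 0)"
    by (auto intro!: derivative_eq_intros)
  from has_derivative_compose[OF this] assms
  have "((\<lambda>t. f (x + t *\<^sub>R v)) has_derivative (\<lambda>t. f' (t *\<^sub>R v))) (at 0)"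
    by simp
  moreover have "f' (t *\<^sub>R v) = f' v * t" for t
    using linear_scale[OF has_derivative_linear[OF assms]] by simp
  ultimately show ?thesis
    by (simp add: has_field_derivative_def)
qed

lemma coord_partial_deriv:
  fixes x :: "real^'n"
  shows "((\<lambda>t. (x + t *\<^sub>R axis i 1) $ j) has_real_derivative (if j = i then 1 else 0)) (at 0)"
  using has_real_derivative_along_line[OF bounded_linear_imp_has_derivative, of "\<lambda>y. y $ j" x "axis i 1"]
  by (simp add: axis_def bounded_linear_vec_nth)

lemma norm_partial_deriv:
  fixes x :: "real^'n"
  assumes "x \<noteq> 0"
  shows "((\<lambda>t. norm (x + t *\<^sub>R axis i 1)) has_real_derivative x $ i / norm x) (at 0)"
  using has_real_derivative_along_line[OF has_derivative_norm[OF assms], of "axis i 1"]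
  by (simp add: inner_axis' sgn_div_norm divide_inverse mult.commute)

lemma gauge_cube_partial_deriv:
  fixes x :: "real^'n"
  assumes "x \<noteq> 0"
  shows "((\<lambda>t. gauge_cube a e (x + t *\<^sub>R axis i 1)) has_real_derivative
           3 * (norm x * x $ i + (if i = a then e else 0) * (x $ a)\<^sup>2)) (at 0)"
proof -
  have "((\<lambda>t. gauge_cube a e (x + t *\<^sub>R axis i 1)) has_real_derivative
      3 * (norm x)\<^sup>2 * (x $ i / norm x) + e * (3 * (x $ a)\<^sup>2 * (if a = i then 1 else 0))) (at 0)"
    unfolding gauge_cube_def
    by (rule derivative_eq_intros norm_partial_deriv[OF assms] coord_partial_deriv refl | simp)+
  moreover have "3 * (norm x)\<^sup>2 * (x $ i / norm x) + e * (3 * (x $ a)\<^sup>2 * (if a = i then 1 else 0))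
      = 3 * (norm x * x $ i + (if i = a then e else 0) * (x $ a)\<^sup>2)"
    using assms by (auto simp: power2_eq_square)
  ultimately show ?thesis
    by simp
qed

lemma rhoK_partial_deriv:
  fixes x :: "real^'n"
  assumes "x \<noteq> 0" "0 \<le> e" "e < 1"
  shows "((\<lambda>t. rhoK a e (x + t *\<^sub>R axis i 1)) has_real_derivative
           - (rhoK a e x ^ 4 * (norm x * x $ i + (if i = a then e else 0) * (x $ a)\<^sup>2))) (at 0)"
proof -
  define Q G where "Q = gauge_cube a e x"
    and "G = norm x * x $ i + (if i = a then e else 0) * (x $ a)\<^sup>2"
  have "Q > 0"
    unfolding Q_def by (rule gauge_cube_pos[OF assms])
  have "((\<lambda>t. rhoK a e (x + t *\<^sub>R axis i 1)) has_real_derivative -1/3 * Q powr (-1/3 - 1) * (3 * G)) (at 0)"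
    unfolding rhoK_def gauge_cube_def[symmetric] Q_def G_def
    using DERIV_fun_powr[OF gauge_cube_partial_deriv[OF assms(1)], where r = "-1/3"] \<open>Q > 0\<close>
    by (simp add: Q_def)
  moreover have "rhoK a e x ^ 4 = Q powr (-1/3 - 1)"
    using powr_power[of Q "-1/3" 4] \<open>Q > 0\<close> by (simp add: rhoK_def Q_def gauge_cube_def)
  ultimately have "((\<lambda>t. rhoK a e (x + t *\<^sub>R axis i 1)) has_real_derivative - (rhoK a e x ^ 4 * G)) (at 0)"
    by simp
  then show ?thesis
    unfolding G_def .
qed

datatype 'n rho_poly =
    Const real | Coord 'n | Norm | Inv_Norm | Rho
  | Add "'n rho_poly" "'n rho_poly" | Mult "'n rho_poly" "'n rho_poly"

fun rho_poly_eval :: "'n \<Rightarrow> real \<Rightarrow> 'n rho_poly \<Rightarrow> real^'n \<Rightarrow> real" where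
  "rho_poly_eval a e (Const c) x = c"
| "rho_poly_eval a e (Coord j) x = x $ j"
| "rho_poly_eval a e Norm x = norm x"
| "rho_poly_eval a e Inv_Norm x = inverse (norm x)"
| "rho_poly_eval a e Rho x = rhoK a e x"
| "rho_poly_eval a e (Add p q) x = rho_poly_eval a e p x + rho_poly_eval a e q x"
| "rho_poly_eval a e (Mult p q) x = rho_poly_eval a e p x * rho_poly_eval a e q x"

fun rho_poly_pderiv :: "'n \<Rightarrow> real \<Rightarrow> 'n \<Rightarrow> 'n rho_poly \<Rightarrow> 'n rho_poly" where
  "rho_poly_pderiv a e i (Const c) = Const 0"
| "rho_poly_pderiv a e i (Coord j) = Const (if j = i then 1 else 0)"
| "rho_poly_pderiv a e i Norm = Mult (Coord i) Inv_Norm"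
| "rho_poly_pderiv a e i Inv_Norm =
     Mult (Const (-1)) (Mult (Coord i) (Mult Inv_Norm (Mult Inv_Norm Inv_Norm)))"
| "rho_poly_pderiv a e i Rho =
     Mult (Const (-1)) (Mult (Mult (Mult (Mult Rho Rho) Rho) Rho)
       (Add (Mult Norm (Coord i)) (Mult (Const (if i = a then e else 0)) (Mult (Coord a) (Coord a)))))"
| "rho_poly_pderiv a e i (Add p q) = Add (rho_poly_pderiv a e i p) (rho_poly_pderiv a e i q)"
| "rho_poly_pderiv a e i (Mult p q) =
     Add (Mult (rho_poly_pderiv a e i p) q) (Mult p (rho_poly_pderiv a e i q))"

lemma has_real_derivative_rho_poly_pderiv:
  fixes x :: "real^'n"
  assumes "x \<noteq> 0" "0 \<le> e" "e < 1"
  shows "((\<lambda>t. rho_poly_eval a e p (x + t *\<^sub>R axis i 1)) has_real_derivative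
           rho_poly_eval a e (rho_poly_pderiv a e i p) x) (at 0)"
proof (induction p)
  case (Const c)
  then show ?case by simp
next
  case (Coord j)
  then show ?case using coord_partial_deriv[of x i j] by simp
next
  case Norm
  then show ?case using norm_partial_deriv[OF assms(1)] by (simp add: divide_inverse)
next
  case Inv_Norm
  have "((\<lambda>t. inverse (norm (x + t *\<^sub>R axis i 1))) has_real_derivative
      - (x $ i / norm x * inverse (norm (x + 0 *\<^sub>R axis i 1) ^ Suc (Suc 0)))) (at 0)"
    by (rule DERIV_inverse_fun[OF norm_partial_deriv[OF assms(1)]]) (use assms in simp)
  then show ?case by (simp add: field_simps power2_eq_square)
next
  case Rho
  then show ?case using rhoK_partial_deriv[OF assms, of a i] by (simp add: power4_eq_xxxx power2_eq_square)
next
  case (Add p q)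
  then show ?case using DERIV_add[OF Add.IH] by simp
next
  case (Mult p q)
  then show ?case using DERIV_mult[OF Mult.IH] by (simp add: mult.commute)
qed

lemma continuous_on_rho_poly_eval:
  fixes a :: "'n::finite"
  assumes "0 \<le> e" "e < 1"
  shows "continuous_on (UNIV - {0}) (rho_poly_eval a e p)"
proof (induction p)
  case Rho
  have "continuous_on (UNIV - {0}) (\<lambda>x::real^'n. gauge_cube a e x powr (-1/3))"
    using gauge_cube_pos[OF _ assms, of _ a] unfolding gauge_cube_def
    by (intro continuous_intros) fastforce+
  then show ?case by (simp add: rhoK_def[abs_def] gauge_cube_def)
qed (auto intro!: continuous_intros)

lemma smooth_on_rhoK:
  assumes "0 \<le> e" "e < 1"
  shows "smooth_on (UNIV - {0}) (rhoK a e)"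
  unfolding smooth_on_def
proof (intro exI conjI ballI allI)
  let ?D = "\<lambda>is. rho_poly_eval a e (foldr (rho_poly_pderiv a e) is Rho)"
  show "?D [] x = rhoK a e x" for x
    by simp
  show "continuous_on (UNIV - {0}) (?D is)" for "is"
    by (rule continuous_on_rho_poly_eval[OF assms])
  show "((\<lambda>t. ?D is (x + t *\<^sub>R axis i 1)) has_real_derivative ?D (i # is) x) (at 0)"
    if "x \<in> UNIV - {0}" for "is" i x
    using has_real_derivative_rho_poly_pderiv[OF _ assms] that by simp
qed

lemma centrally_symmetric_reflection:
  fixes K :: "'a::real_vector set"
  assumes "centrally_symmetric K"
  obtains c where "\<And>y. y \<in> K \<Longrightarrow> 2 *\<^sub>R c - y \<in> K"
proof -
  from assms obtain c X where X: "X = uminus ` X" and K: "K = (\<lambda>x. c + x) ` X"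
    unfolding centrally_symmetric_def by blast
  have "2 *\<^sub>R c - (c + x) \<in> K" if "x \<in> X" for x
  proof -
    have "- x \<in> X"
      using that X by (metis imageI)
    then show ?thesis
      unfolding K by (rule image_eqI[rotated]) (simp add: scaleR_2)
  qed
  then show thesis
    using that K by blast
qed

lemma sq_coords_le_norm_sq:
  fixes y :: "real^'n"
  assumes "j \<noteq> a"
  shows "(y $ a)\<^sup>2 + (y $ j)\<^sup>2 \<le> (norm y)\<^sup>2"
proof -
  have "(y $ a)\<^sup>2 + (y $ j)\<^sup>2 = (\<Sum>i\<in>{a, j}. (y $ i)\<^sup>2)"
    using assms by simp
  also have "\<dots> \<le> (\<Sum>i\<in>UNIV. (y $ i)\<^sup>2)"
    by (rule sum_mono2) auto
  also have "\<dots> = (norm y)\<^sup>2"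
    unfolding power2_norm_eq_inner inner_vec_def by (simp add: power2_eq_square)
  finally show ?thesis .
qed

lemma gauge_cube_ge_coord:
  fixes y :: "real^'n"
  assumes "0 \<le> e"
  shows "\<bar>y $ a\<bar> ^ 3 + e * (y $ a) ^ 3 \<le> gauge_cube a e y"
  unfolding gauge_cube_def by (intro add_right_mono power_mono component_le_norm_cart) simp

lemma gauge_cube_gt_one_off_axis:
  fixes y :: "real^'n"
  assumes "j \<noteq> a" "1 \<le> \<bar>y $ j\<bar>" "y $ a \<noteq> 0" "0 \<le> e" "e < 1"
  shows "1 < gauge_cube a e y"
proof -
  define S b where "S = norm y" and "b = \<bar>y $ a\<bar>"
  have "1 \<le> (y $ j)\<^sup>2"
    using one_le_power[OF assms(2), of 2] by simp
  then have S_sq: "1 + b\<^sup>2 \<le> S\<^sup>2"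
    using sq_coords_le_norm_sq[OF assms(1), of y] unfolding S_def b_def by simp
  have "1\<^sup>2 \<le> S\<^sup>2" "b\<^sup>2 \<le> S\<^sup>2"
    using S_sq zero_le_power2[of b] unfolding one_power2 by linarith+
  then have "1 \<le> S" "b \<le> S"
    unfolding S_def by (metis norm_ge_zero power2_le_imp_le)+
  then have "1 + b * b\<^sup>2 \<le> S * (1 + b\<^sup>2)"
    by (simp add: distrib_left mult_right_mono add_mono)
  also have "\<dots> \<le> S * S\<^sup>2"
    using S_sq by (simp add: S_def mult_left_mono)
  finally have "1 + b ^ 3 \<le> norm y ^ 3"
    by (simp add: S_def power2_eq_square power3_eq_cube)
  moreover have "- (e * b ^ 3) \<le> e * (y $ a) ^ 3"
    using mult_left_mono[OF _ assms(4), of "- (b ^ 3)" "(y $ a) ^ 3"]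
    by (simp add: b_def power_abs[symmetric])
  moreover have "e * b ^ 3 < b ^ 3"
    using assms(3,5) by (simp add: b_def)
  ultimately show ?thesis
    unfolding gauge_cube_def by linarith
qed

lemma not_centrally_symmetric_Keps:
  fixes a j :: "'n::finite"
  assumes "0 < e" "e < 1" "j \<noteq> a"
  shows "\<not> centrally_symmetric (Keps a e)"
proof
  assume "centrally_symmetric (Keps a e)"
  moreover have "Keps a e = {x. gauge_cube a e x \<le> 1}"
    using assms by (intro Keps_eq_sublevel) simp_all
  ultimately obtain c where reflect: "\<And>y. gauge_cube a e y \<le> 1 \<Longrightarrow> gauge_cube a e (2 *\<^sub>R c - y) \<le> 1"
    by (metis centrally_symmetric_reflection mem_Collect_eq)
  show False
  proof (cases "c $ a = 0")
    case True
    define t where "t = root 3 (1 / (1 - e))"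
    have "0 < t" "(1 - e) * t ^ 3 = 1"
      using assms by (simp_all add: t_def)
    then have "gauge_cube a e (- t *\<^sub>R axis a 1) \<le> 1"
      by (simp add: gauge_cube_def algebra_simps)
    then have "gauge_cube a e (2 *\<^sub>R c + t *\<^sub>R axis a 1) \<le> 1"
      using reflect by fastforce
    moreover have "t ^ 3 + e * t ^ 3 \<le> gauge_cube a e (2 *\<^sub>R c + t *\<^sub>R axis a 1)"
      using gauge_cube_ge_coord[of e "2 *\<^sub>R c + t *\<^sub>R axis a 1" a] assms True \<open>0 < t\<close> by simp
    moreover have "0 < e * t ^ 3"
      using assms(1) \<open>0 < t\<close> by simp
    ultimately show False
      using \<open>(1 - e) * t ^ 3 = 1\<close> by (simp add: algebra_simps)
  next
    case False
    define s :: real where "s = (if c $ j \<le> 0 then 1 else -1)"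
    have axis_a: "axis j (1::real) $ a = 0"
      using assms(3) by (simp add: axis_def)
    then have "gauge_cube a e (s *\<^sub>R axis j 1) \<le> 1"
      by (simp add: gauge_cube_def s_def)
    then have "gauge_cube a e (2 *\<^sub>R c - s *\<^sub>R axis j 1) \<le> 1"
      by (rule reflect)
    moreover have "1 < gauge_cube a e (2 *\<^sub>R c - s *\<^sub>R axis j 1)"
      using assms False axis_a by (intro gauge_cube_gt_one_off_axis[of j]) (auto simp: s_def)
    ultimately show False
      by simp
  qed
qed

lemma convex_on_if_above_tangents:
  fixes f :: "'a::real_vector \<Rightarrow> real"
  assumes "\<And>y. linear (f' y)" and "\<And>x y. f y + f' y (x - y) \<le> f x"
  shows "convex_on UNIV f"
proof (rule convex_onI)
  fix t :: real and x y :: 'a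
  assume "0 < t" "t < 1"
  define z where "z = (1 - t) *\<^sub>R x + t *\<^sub>R y"
  have "(1 - t) *\<^sub>R (x - z) + t *\<^sub>R (y - z) = 0"
    by (simp add: z_def algebra_simps)
  then have "f' z ((1 - t) *\<^sub>R (x - z) + t *\<^sub>R (y - z)) = 0"
    using linear_0[OF assms(1)] by simp
  then have tangent_terms: "(1 - t) * f' z (x - z) + t * f' z (y - z) = 0"
    by (simp add: linear_add[OF assms(1)] linear_scale[OF assms(1)])
  have "(1 - t) * (f z + f' z (x - z)) \<le> (1 - t) * f x" "t * (f z + f' z (y - z)) \<le> t * f y"
    using assms(2) \<open>0 < t\<close> \<open>t < 1\<close> by (intro mult_left_mono; simp)+
  then show "f z \<le> (1 - t) * f x + t * f y"
    using tangent_terms by (simp add: algebra_simps)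
qed simp

lemma convex_sublevel:
  assumes "convex_on UNIV f"
  shows "convex {x. f x \<le> c}"
  unfolding convex_def using convex_lower[OF assms] by (simp add: le_max_iff_disj) (meson UNIV_I order_trans)

text \<open>With r = |x|, s = |y|, d = |x - y|, the right-hand side is 18 times the tangent remainder of
  |x|^3 at y, and minus the left-hand side is a lower bound for the tangent remainder of x_a^3.\<close>

lemma cube_tangent_gap_bound:
  fixes r s d :: real
  assumes "0 \<le> s" "\<bar>r - s\<bar> \<le> d" "d \<le> r + s"
  shows "d\<^sup>2 * (r + 2 * s) \<le> 18 * ((r - s)\<^sup>2 * (r + s / 2) + 3 / 2 * s * d\<^sup>2)"
proof (cases "r \<le> 2 * s")
  case True
  have "d\<^sup>2 * (r + 2 * s) \<le> d\<^sup>2 * (4 * s)"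
    using True by (intro mult_left_mono) simp_all
  moreover have "0 \<le> (r - s)\<^sup>2 * (r + s / 2)" "0 \<le> s * d\<^sup>2"
    using assms by simp_all
  ultimately show ?thesis
    by (simp add: algebra_simps)
next
  case False
  have "d\<^sup>2 \<le> (3 / 2 * r)\<^sup>2"
    using assms False by (intro power_mono) auto
  then have "d\<^sup>2 * (r + 2 * s) \<le> (3 / 2 * r)\<^sup>2 * (2 * r)"
    using False assms(1) by (intro mult_mono) simp_all
  moreover have "(r / 2)\<^sup>2 * r \<le> (r - s)\<^sup>2 * (r + s / 2)"
    using False assms(1) by (intro mult_mono power_mono) simp_all
  moreover have "0 \<le> s * d\<^sup>2"
    using assms by simp
  ultimately show ?thesis
    by (simp add: power2_eq_square algebra_simps)
qed

lemma gauge_cube_above_tangent: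
  fixes x y :: "real^'n"
  assumes "0 \<le> e" "e \<le> 1/18"
  shows "gauge_cube a e y + (3 * norm y * (y \<bullet> (x - y)) + 3 * e * (y $ a)\<^sup>2 * (x - y) $ a)
           \<le> gauge_cube a e x"
proof -
  define r s d where "r = norm x" and "s = norm y" and "d = norm (x - y)"
  have "d\<^sup>2 = r\<^sup>2 + s\<^sup>2 - 2 * (x \<bullet> y)"
    unfolding r_def s_def d_def power2_norm_eq_inner
    by (simp add: inner_diff_left inner_diff_right inner_commute)
  then have inner_eq: "y \<bullet> (x - y) = (r\<^sup>2 - s\<^sup>2 - d\<^sup>2) / 2"
    unfolding s_def power2_norm_eq_inner by (simp add: inner_diff_right inner_commute)
  define N where "N = (r - s)\<^sup>2 * (r + s / 2) + 3 / 2 * s * d\<^sup>2"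
  define C where "C = ((x - y) $ a)\<^sup>2 * (x $ a + 2 * y $ a)"
  define D where "D = d\<^sup>2 * (r + 2 * s)"
  have norm_gap: "r ^ 3 - s ^ 3 - 3 * s * (y \<bullet> (x - y)) = N"
    unfolding inner_eq N_def by (simp add: field_simps power2_eq_square power3_eq_cube)
  have coord_gap: "(x $ a) ^ 3 - (y $ a) ^ 3 - 3 * (y $ a)\<^sup>2 * (x - y) $ a = C"
    unfolding C_def by (simp add: algebra_simps power2_eq_square power3_eq_cube)
  have gap: "gauge_cube a e x
      - (gauge_cube a e y + (3 * norm y * (y \<bullet> (x - y)) + 3 * e * (y $ a)\<^sup>2 * (x - y) $ a))
      = N + e * C"
    unfolding norm_gap[symmetric] coord_gap[symmetric]
    by (simp add: gauge_cube_def r_def s_def algebra_simps)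
  have "\<bar>(x - y) $ a\<bar> \<le> d" "\<bar>x $ a\<bar> \<le> r" "\<bar>y $ a\<bar> \<le> s"
    unfolding r_def s_def d_def by (rule component_le_norm_cart)+
  then have "\<bar>(x - y) $ a\<bar>\<^sup>2 * \<bar>x $ a + 2 * y $ a\<bar> \<le> D"
    unfolding D_def by (intro mult_mono power_mono) auto
  then have "\<bar>C\<bar> \<le> D"
    unfolding C_def by (simp add: abs_mult)
  then have "- D \<le> C"
    by (simp add: abs_le_iff)
  then have "- (e * D) \<le> e * C"
    using mult_left_mono[OF _ assms(1)] by fastforce
  moreover have "e * D \<le> D / 18"
    using mult_right_mono[OF assms(2), of D] by (simp add: D_def r_def s_def)
  moreover have "D \<le> 18 * N"
    unfolding D_def N_def r_def s_def d_def
    by (intro cube_tangent_gap_bound norm_ge_zero norm_triangle_ineq3 norm_triangle_ineq4)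
  ultimately show ?thesis
    using gap by linarith
qed

lemma convex_on_gauge_cube:
  fixes a :: "'n::finite"
  assumes "0 \<le> e" "e \<le> 1/18"
  shows "convex_on UNIV (gauge_cube a e)"
proof (rule convex_on_if_above_tangents)
  show "linear (\<lambda>h. 3 * norm y * (y \<bullet> h) + 3 * e * (y $ a)\<^sup>2 * h $ a)" for y :: "real^'n"
    by (rule linearI) (simp_all add: inner_add_right algebra_simps)
qed (rule gauge_cube_above_tangent[OF assms])

lemma convex_Keps:
  assumes "0 \<le> e" "e \<le> 1/18"
  shows "convex (Keps a e)"
proof -
  have "Keps a e = {x. gauge_cube a e x \<le> 1}"
    using assms by (intro Keps_eq_sublevel) simp_all
  then show ?thesis
    using convex_sublevel[OF convex_on_gauge_cube[OF assms]] by simp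
qed

theorem lemma3p2:
  fixes a :: "'n::finite"
  assumes "CARD('n) \<ge> 2"
  shows "(\<forall>\<epsilon>. 0 < \<epsilon> \<and> \<epsilon> < 1 \<longrightarrow>
            smooth_on (UNIV - {0}) (rhoK a \<epsilon>) \<and> \<not> centrally_symmetric (Keps a \<epsilon>))
       \<and> (\<exists>\<epsilon>0. 0 < \<epsilon>0 \<and> \<epsilon>0 \<le> 1 \<and> (\<forall>\<epsilon>. 0 < \<epsilon> \<and> \<epsilon> < \<epsilon>0 \<longrightarrow> convex (Keps a \<epsilon>)))"
proof -
  obtain j :: 'n where "j \<noteq> a"
  proof (rule ccontr)
    assume "\<not> thesis"
    with that have "UNIV = {a}"
      by auto
    then have "CARD('n) = card {a}"
      by (rule arg_cong)
    with assms show False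
      by simp
  qed
  have "smooth_on (UNIV - {0}) (rhoK a \<epsilon>) \<and> \<not> centrally_symmetric (Keps a \<epsilon>)"
    if "0 < \<epsilon>" "\<epsilon> < 1" for \<epsilon>
    using that smooth_on_rhoK[of \<epsilon> a] not_centrally_symmetric_Keps[OF _ _ \<open>j \<noteq> a\<close>] by simp
  moreover have "convex (Keps a \<epsilon>)" if "0 < \<epsilon>" "\<epsilon> < 1/18" for \<epsilon>
    using that by (intro convex_Keps) simp_all
  ultimately show ?thesis
    by (intro conjI allI impI exI[of _ "1/18"]) auto
qed

end
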